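(* An integral domain $D$ is a quasilocal API-domain if and only if for each nonempty subset $\{a_\alpha\}_{\alpha\in\Lambda}$ of $D\setminus\{0\}$ there exist a natural number $n$ and $\alpha_0\in\Lambda$ with $a_{\alpha_0}^n\mid a_\alpha^n$ for every $\alpha\in\Lambda$.
   Context: Quasilocal: having a unique maximal ideal. An integral domain $D$ is an API-domain if for every nonempty subset $\{d_\alpha\}_{\alpha\in\Lambda}$ of $D\setminus\{0\}$ there is a natural number $n$ such that the ideal generated by $\{d_\alpha^n\}_{\alpha\in\Lambda}$ is principal. *)

theory Defs
  imports "HOL-Algebra.Algebra"
begin

definition quasilocal :: "('a, 'b) ring_scheme \<Rightarrow> bool" where
  "quasilocal R \<longleftrightarrow> (\<exists>!M. maximalideal M R)"

definition API_domain :: "('a, 'b) ring_scheme \<Rightarrow> bool" where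
  "API_domain R \<longleftrightarrow> domain R \<and>
     (\<forall>S. S \<subseteq> carrier R - {\<zero>\<^bsub>R\<^esub>} \<and> S \<noteq> {} \<longrightarrow>
        (\<exists>n::nat. n \<ge> 1 \<and> principalideal (Idl\<^bsub>R\<^esub> ((\<lambda>d. d [^]\<^bsub>R\<^esub> n) ` S)) R))"

end

theory Submission
  imports Defs
begin

text \<open>
  Let \<open>D\<close> be quasilocal with maximal ideal \<open>M\<close>, and let the ideal generated by a set \<open>P\<close> be
  principal, say \<open>(i)\<close> with \<open>i \<noteq> 0\<close>. If no element of \<open>P\<close> were associated to \<open>i\<close>, every
  element of \<open>P\<close> would be a nonunit multiple of \<open>i\<close>, so \<open>P \<subseteq> M i\<close>; then \<open>i \<in> M i\<close> and
  cancelling \<open>i\<close> puts \<open>1\<close> in \<open>M\<close>. An associate of \<open>i\<close> in \<open>P\<close> divides every element of \<open>P\<close>;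
  applied to the \<open>n\<close>-th powers this gives the condition.

  Conversely, the condition directly makes the ideal of \<open>n\<close>-th powers principal, generated by
  \<open>a\<^sub>0\<^sup>n\<close>. It also makes the nonunits closed under addition: rescaling, a counterexample
  gives nonunits \<open>a + b = 1\<close>, and by the condition we may assume \<open>a\<^sup>n | b\<^sup>n\<close>; but
  \<open>b\<^sup>n \<equiv> 1\<close> modulo \<open>a\<close>, so \<open>a\<close> would be a unit. Hence the nonunits form the unique maximal ideal.
\<close>

lemma (in ideal) Units_imp_carrier:
  assumes "u \<in> I" "u \<in> Units R"
  shows "I = carrier R"
proof (rule one_imp_carrier)
  have "inv u \<otimes> u \<in> I" using assms by (intro I_l_closed) auto
  then show "\<one> \<in> I" using assms(2) by simp
qed

lemma (in ring) exists_maximalideal_superset: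
  assumes I: "ideal I R" and proper: "I \<noteq> carrier R"
  shows "\<exists>M. maximalideal M R \<and> I \<subseteq> M"
proof -
  define Cands where "Cands = {J. ideal J R \<and> I \<subseteq> J \<and> \<one> \<notin> J}"
  have "\<one> \<notin> I" using ideal.one_imp_carrier[OF I] proper by blast
  have "\<exists>M\<in>Cands. \<forall>J\<in>Cands. M \<subseteq> J \<longrightarrow> J = M"
  proof (rule subset_Zorn)
    fix C assume C: "subset.chain Cands C"
    show "\<exists>U\<in>Cands. \<forall>J\<in>C. J \<subseteq> U"
    proof (cases "C = {}")
      case True
      then show ?thesis using I \<open>\<one> \<notin> I\<close> Cands_def by auto
    next
      case False
      have "subset.chain {J. ideal J R} C"
        using C unfolding pred_on.chain_def Cands_def by auto
      from chain_Union_is_ideal[OF this] have "ideal (\<Union>C) R" using False by simp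
      moreover have "I \<subseteq> \<Union>C" using C False unfolding pred_on.chain_def Cands_def by blast
      moreover have "\<one> \<notin> \<Union>C" using C unfolding pred_on.chain_def Cands_def by blast
      ultimately show ?thesis unfolding Cands_def by auto
    qed
  qed
  then obtain M where M: "M \<in> Cands" and M_max: "\<And>J. J \<in> Cands \<Longrightarrow> M \<subseteq> J \<Longrightarrow> J = M"
    by blast
  have "maximalideal M R"
  proof (rule maximalidealI)
    show "ideal M R" "carrier R \<noteq> M" using M Cands_def by auto
    fix J assume J: "ideal J R" "M \<subseteq> J" "J \<subseteq> carrier R"
    show "J = M \<or> J = carrier R"
      using ideal.one_imp_carrier[OF J(1)] M_max[of J] J M Cands_def by blast
  qed
  then show ?thesis using M Cands_def by auto
qed

lemma (in cring) quasilocal_nonunit_in_maximalideal: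
  assumes "quasilocal R" "maximalideal M R" "x \<in> carrier R" "x \<notin> Units R"
  shows "x \<in> M"
proof -
  have "PIdl x \<noteq> carrier R" using ideal_eq_carrier_iff assms(3,4) by metis
  then obtain N where "maximalideal N R" "PIdl x \<subseteq> N"
    using exists_maximalideal_superset cgenideal_ideal assms(3) by blast
  moreover have "N = M" using calculation(1) assms(1,2) unfolding quasilocal_def by blast
  ultimately show ?thesis using cgenideal_self assms(3) by blast
qed

lemma (in cring) ideal_image_mult_right:
  assumes "ideal I R" "a \<in> carrier R"
  shows "ideal ((\<lambda>x. x \<otimes> a) ` I) R"
proof -
  interpret ideal I R by fact
  show ?thesis
  proof (intro subgroup.intro idealI[OF ring_axioms], simp_all add: image_iff)
    show "(\<lambda>x. x \<otimes> a) ` I \<subseteq> carrier R" using assms(2) by auto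
    show "\<And>x y. \<exists>u\<in>I. x = u \<otimes> a \<Longrightarrow> \<exists>v\<in>I. y = v \<otimes> a \<Longrightarrow> \<exists>w\<in>I. x \<oplus> y = w \<otimes> a"
      using assms(2) by (metis a_closed l_distr Icarr)
    show "\<exists>u\<in>I. \<zero> = u \<otimes> a" using assms(2) by (metis l_null zero_closed)
    show "\<And>x. \<exists>u\<in>I. x = u \<otimes> a \<Longrightarrow> \<exists>w\<in>I. inv\<^bsub>add_monoid R\<^esub> x = w \<otimes> a"
      using assms(2) by (metis a_inv_def a_inv_closed l_minus Icarr)
    show "\<And>y x. \<exists>u\<in>I. y = u \<otimes> a \<Longrightarrow> x \<in> carrier R \<Longrightarrow> \<exists>w\<in>I. x \<otimes> y = w \<otimes> a"
      using assms(2) by (metis I_l_closed m_assoc Icarr)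
    show "\<And>y x. \<exists>u\<in>I. y = u \<otimes> a \<Longrightarrow> x \<in> carrier R \<Longrightarrow> \<exists>w\<in>I. y \<otimes> x = w \<otimes> a"
      using assms(2) by (metis I_r_closed m_assoc m_comm Icarr)
  qed
qed

lemma (in domain) quasilocal_genideal_eq_PIdl_imp_associated:
  assumes "quasilocal R" "P \<subseteq> carrier R" "i \<in> carrier R" "i \<noteq> \<zero>" "Idl P = PIdl i"
  shows "\<exists>p\<in>P. p \<sim> i"
proof (rule ccontr)
  assume no_assoc: "\<not> (\<exists>p\<in>P. p \<sim> i)"
  obtain M where M: "maximalideal M R" using assms(1) unfolding quasilocal_def by blast
  then have "ideal M R" by (rule maximalideal.axioms(1))
  have "P \<subseteq> (\<lambda>m. m \<otimes> i) ` M"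
  proof
    fix p assume "p \<in> P"
    then have "p \<in> PIdl i" using genideal_self assms(2,5) by blast
    then obtain t where t: "t \<in> carrier R" "p = t \<otimes> i" unfolding cgenideal_def by blast
    have "t \<notin> Units R" using no_assoc \<open>p \<in> P\<close> t assms(3) by (metis associatedI2 m_comm)
    then show "p \<in> (\<lambda>m. m \<otimes> i) ` M"
      using quasilocal_nonunit_in_maximalideal[OF assms(1) M t(1)] t(2) by blast
  qed
  then have "PIdl i \<subseteq> (\<lambda>m. m \<otimes> i) ` M"
    using genideal_minimal ideal_image_mult_right[OF \<open>ideal M R\<close> assms(3)] assms(5) by metis
  then obtain m where m: "m \<in> M" "i = m \<otimes> i" using cgenideal_self assms(3) by blast
  have "m \<in> carrier R" using m(1) ideal.Icarr[OF \<open>ideal M R\<close>] by blast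
  then have "m = \<one>" using m(2) m_rcancel[OF assms(4,3)] assms(3) by (metis l_one one_closed)
  then show False
    using m(1) ideal.one_imp_carrier[OF \<open>ideal M R\<close>] maximalideal.I_notcarr[OF M] by simp
qed

lemma (in domain) quasilocal_principal_genideal_imp_divisor_in_set:
  assumes "quasilocal R" "P \<subseteq> carrier R" "P \<noteq> {}" "principalideal (Idl P) R"
  shows "\<exists>p\<in>P. \<forall>x\<in>P. p divides x"
proof -
  obtain i where i: "i \<in> carrier R" "Idl P = PIdl i"
    using principalideal.generate[OF assms(4)] cgenideal_eq_genideal by auto
  have "\<exists>p\<in>P. PIdl p = PIdl i"
  proof (cases "i = \<zero>")
    case True
    obtain p where p: "p \<in> P" using assms(3) by blast
    have "Idl P = {\<zero>}" using True i(2) genideal_zero cgenideal_eq_genideal[OF zero_closed] by simp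
    then have "p = \<zero>" using p genideal_self[OF assms(2)] by blast
    then show ?thesis using p True by blast
  next
    case False
    then obtain p where p: "p \<in> P" "p \<sim> i"
      using quasilocal_genideal_eq_PIdl_imp_associated[OF assms(1,2) i(1) False i(2)] by blast
    moreover have "p \<in> carrier R" using p(1) assms(2) by blast
    ultimately show ?thesis using associated_iff_same_ideal[OF _ i(1)] by blast
  qed
  then obtain p where p: "p \<in> P" "PIdl p = Idl P" using i(2) by auto
  have "PIdl x \<subseteq> PIdl p" if "x \<in> P" for x
  proof -
    have "x \<in> PIdl p" using genideal_self[OF assms(2)] p(2) that by blast
    then show ?thesis using cgenideal_minimal[OF cgenideal_ideal] p(1) assms(2) by blast
  qed
  moreover have "p \<in> carrier R" using p(1) assms(2) by blast
  ultimately show ?thesis using to_contain_is_to_divide p(1) assms(2) by (meson subsetD)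
qed

lemma (in cring) principal_genideal_if_divides_all:
  assumes S: "S \<subseteq> carrier R" and a: "a \<in> S" "\<forall>x\<in>S. a divides x"
  shows "principalideal (Idl S) R"
proof -
  have "x \<in> PIdl a" if "x \<in> S" for x
  proof -
    have "PIdl x \<subseteq> PIdl a" using to_contain_is_to_divide[of a x] S a that by blast
    then show ?thesis using cgenideal_self[of x] S that by blast
  qed
  then have "Idl S \<subseteq> PIdl a" using genideal_minimal[OF cgenideal_ideal] S a(1) by blast
  moreover have "PIdl a \<subseteq> Idl S"
    using cgenideal_minimal[OF genideal_ideal] genideal_self S a(1) by blast
  ultimately have "Idl S = Idl {a}" using cgenideal_eq_genideal S a(1) by blast
  then show ?thesis using principalidealI genideal_ideal S a(1) by blast
qed

lemma (in cring) sum_one_imp_pow_add_mult_one: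
  assumes a: "a \<in> carrier R" and b: "b \<in> carrier R" and ab: "a \<oplus> b = \<one>"
  shows "\<exists>f\<in>carrier R. b [^] (n::nat) \<oplus> a \<otimes> f = \<one>"
proof (induction n)
  case 0
  show ?case using a by (intro bexI[of _ \<zero>]) auto
next
  case (Suc n)
  then obtain f where f: "f \<in> carrier R" "b [^] n \<oplus> a \<otimes> f = \<one>" by blast
  define g where "g = b [^] n \<oplus> f \<otimes> a \<oplus> f \<otimes> b"
  have "b [^] Suc n \<oplus> a \<otimes> g = (b [^] n \<oplus> a \<otimes> f) \<otimes> (a \<oplus> b)"
    unfolding g_def using a b f(1) by (simp add: l_distr r_distr a_ac m_ac)
  also have "\<dots> = \<one>" using f ab by simp
  finally show ?case using a b f(1) g_def by blast
qed

lemma (in cring) unit_if_pow_divides_complement_pow: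
  assumes a: "a \<in> carrier R" and b: "b \<in> carrier R" and ab: "a \<oplus> b = \<one>"
    and n: "n > 0" and dvd: "(a [^] n) divides (b [^] (n::nat))"
  shows "a \<in> Units R"
proof -
  obtain f where f: "f \<in> carrier R" "b [^] n \<oplus> a \<otimes> f = \<one>"
    using sum_one_imp_pow_add_mult_one[OF a b ab] by blast
  obtain c where c: "c \<in> carrier R" "b [^] n = a [^] n \<otimes> c" using dvd unfolding factor_def by blast
  obtain k where k: "n = Suc k" using n by (cases n) auto
  have "a \<otimes> (a [^] k \<otimes> c \<oplus> f) = \<one>"
    using f c a k by (simp add: nat_pow_Suc2 m_ac r_distr)
  then show ?thesis using a c f unit_factor[of a "a [^] k \<otimes> c \<oplus> f"] by simp
qed

lemma (in cring) nonunits_add_closed_if_pow_comparable: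
  assumes comparable: "\<And>x y. x \<in> carrier R - {\<zero>} \<Longrightarrow> y \<in> carrier R - {\<zero>} \<Longrightarrow>
      \<exists>n::nat. n > 0 \<and> ((x [^] n) divides (y [^] n) \<or> (y [^] n) divides (x [^] n))"
    and a: "a \<in> carrier R" "a \<notin> Units R" and b: "b \<in> carrier R" "b \<notin> Units R"
  shows "a \<oplus> b \<notin> Units R"
proof
  assume u: "a \<oplus> b \<in> Units R"
  define a' b' where "a' = a \<otimes> inv (a \<oplus> b)" and "b' = b \<otimes> inv (a \<oplus> b)"
  have carr: "a' \<in> carrier R" "b' \<in> carrier R" using a b u a'_def b'_def by auto
  have sum: "a' \<oplus> b' = \<one>" "b' \<oplus> a' = \<one>"
    using a b u unfolding a'_def b'_def by (simp_all add: l_distr[symmetric] a_comm)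
  have "a' \<otimes> (a \<oplus> b) = a" "b' \<otimes> (a \<oplus> b) = b"
    using a b u unfolding a'_def b'_def by (simp_all add: m_assoc)
  then have nonunit: "a' \<notin> Units R" "b' \<notin> Units R"
    using a(2) b(2) u by (metis Units_m_closed)+
  then have "a' \<noteq> \<zero>" "b' \<noteq> \<zero>" using sum carr by auto
  then obtain n :: nat where "n > 0" "(a' [^] n) divides (b' [^] n) \<or> (b' [^] n) divides (a' [^] n)"
    using comparable carr by blast
  then show False
    using unit_if_pow_divides_complement_pow[OF carr sum(1)]
      unit_if_pow_divides_complement_pow[OF carr(2,1) sum(2)] nonunit by blast
qed

lemma (in cring) quasilocal_if_nonunits_add_closed:
  assumes nontrivial: "\<one> \<noteq> \<zero>"
    and add_closed: "\<And>a b. a \<in> carrier R - Units R \<Longrightarrow> b \<in> carrier R - Units R \<Longrightarrow>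
      a \<oplus> b \<notin> Units R"
  shows "quasilocal R"
proof -
  let ?N = "carrier R - Units R"
  have "\<zero> \<notin> Units R"
  proof
    assume zero: "\<zero> \<in> Units R"
    show False
      using Units_r_inv[OF zero] l_null[OF Units_inv_closed[OF zero]] nontrivial by metis
  qed
  have N_ideal: "ideal ?N R"
  proof (rule idealI[OF ring_axioms])
    show "subgroup ?N (add_monoid R)"
    proof (rule subgroup.intro)
      show "inv\<^bsub>add_monoid R\<^esub> x \<in> ?N" if x: "x \<in> ?N" for x
      proof -
        have "x \<otimes> \<ominus> \<one> \<notin> Units R" using x unit_factor[of x "\<ominus> \<one>"] by blast
        moreover have "x \<otimes> \<ominus> \<one> = \<ominus> x" using x by (simp add: r_minus)
        ultimately show ?thesis using x by (simp add: a_inv_def)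
      qed
      show "?N \<subseteq> carrier (add_monoid R)" by auto
      show "x \<otimes>\<^bsub>add_monoid R\<^esub> y \<in> ?N" if "x \<in> ?N" "y \<in> ?N" for x y
        using add_closed that by simp
      show "\<one>\<^bsub>add_monoid R\<^esub> \<in> ?N" using \<open>\<zero> \<notin> Units R\<close> by simp
    qed
    show "x \<otimes> a \<in> ?N" "a \<otimes> x \<in> ?N" if "a \<in> ?N" "x \<in> carrier R" for a x
      using that unit_factor[of a x] by (auto simp: m_comm)
  qed
  have N_max: "maximalideal ?N R"
  proof (rule maximalidealI[OF N_ideal])
    show "carrier R \<noteq> ?N" using Units_one_closed one_closed by blast
    show "J = ?N \<or> J = carrier R" if J: "ideal J R" "?N \<subseteq> J" "J \<subseteq> carrier R" for J
    proof (cases "J \<inter> Units R = {}")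
      case True
      then show ?thesis using J by blast
    next
      case False
      then show ?thesis using ideal.Units_imp_carrier[OF J(1)] by blast
    qed
  qed
  have maximal_subset: "M \<subseteq> ?N" if M: "maximalideal M R" for M
  proof
    fix x assume x: "x \<in> M"
    interpret maximalideal M R by (rule M)
    have "x \<notin> Units R" using Units_imp_carrier[OF x] I_notcarr by auto
    then show "x \<in> ?N" using Icarr[OF x] by blast
  qed
  show ?thesis
    unfolding quasilocal_def
  proof (rule ex1I[of _ ?N])
    show "maximalideal ?N R" by (rule N_max)
    fix M assume M: "maximalideal M R"
    have "?N = M \<or> ?N = carrier R"
      using maximalideal.I_maximal[OF M N_ideal maximal_subset[OF M] Diff_subset] .
    then show "M = ?N" using Units_one_closed by blast
  qed
qed

theorem theorem4:
  fixes R :: "('a, 'b) ring_scheme"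
  assumes "domain R"
  shows "(quasilocal R \<and> API_domain R) \<longleftrightarrow>
    (\<forall>S. S \<subseteq> carrier R - {\<zero>\<^bsub>R\<^esub>} \<and> S \<noteq> {} \<longrightarrow>
       (\<exists>n::nat. n \<ge> 1 \<and> (\<exists>a0\<in>S. \<forall>a\<in>S. (a0 [^]\<^bsub>R\<^esub> n) divides\<^bsub>R\<^esub> (a [^]\<^bsub>R\<^esub> n))))"
    (is "_ \<longleftrightarrow> (\<forall>S. ?nonzero S \<longrightarrow> (\<exists>n. n \<ge> 1 \<and> ?divisor S n))")
proof -
  interpret domain R by fact
  let ?pow = "\<lambda>n d. d [^]\<^bsub>R\<^esub> (n::nat)"
  have divisor_iff: "?divisor S n \<longleftrightarrow> (\<exists>p\<in>?pow n ` S. \<forall>x\<in>?pow n ` S. p divides\<^bsub>R\<^esub> x)"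
    for S n by blast
  have pow_image: "?pow n ` S \<subseteq> carrier R" "?pow n ` S \<noteq> {}" if "?nonzero S" for S n
    using that by auto
  show ?thesis
  proof (intro iffI allI impI)
    fix S assume local_API: "quasilocal R \<and> API_domain R" and S: "?nonzero S"
    then obtain n :: nat where "n \<ge> 1" "principalideal (Idl\<^bsub>R\<^esub> (?pow n ` S)) R"
      unfolding API_domain_def by blast
    then show "\<exists>n. n \<ge> 1 \<and> ?divisor S n"
      using quasilocal_principal_genideal_imp_divisor_in_set[OF _ pow_image[OF S]] local_API
      unfolding divisor_iff by blast
  next
    assume divisor: "\<forall>S. ?nonzero S \<longrightarrow> (\<exists>n. n \<ge> 1 \<and> ?divisor S n)"
    have "\<exists>n\<ge>1. principalideal (Idl\<^bsub>R\<^esub> (?pow n ` S)) R" if S: "?nonzero S" for S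
      using divisor[rule_format, OF S] principal_genideal_if_divides_all[OF pow_image(1)[OF S]]
      unfolding divisor_iff by blast
    then have "API_domain R" unfolding API_domain_def using domain_axioms by blast
    have "\<exists>n::nat. n > 0 \<and> ((x [^]\<^bsub>R\<^esub> n) divides\<^bsub>R\<^esub> (y [^]\<^bsub>R\<^esub> n) \<or>
        (y [^]\<^bsub>R\<^esub> n) divides\<^bsub>R\<^esub> (x [^]\<^bsub>R\<^esub> n))"
      if "x \<in> carrier R - {\<zero>\<^bsub>R\<^esub>}" "y \<in> carrier R - {\<zero>\<^bsub>R\<^esub>}" for x y
      using divisor[rule_format, of "{x, y}"] that by (auto simp: Suc_le_eq)
    then have "quasilocal R"
      using quasilocal_if_nonunits_add_closed[OF one_not_zero] nonunits_add_closed_if_pow_comparable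
      by blast
    with \<open>API_domain R\<close> show "quasilocal R \<and> API_domain R" by blast
  qed
qed

end
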